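(* Let $\Omega\subset\mathbb{R}^d$ be a bounded Lipschitz domain whose local Lipschitz constants are bounded by a fixed $L>0$, let $0<\alpha\le1$, $\delta,M_1,M_2>0$, and let $y\in C^{1,\alpha}(\Omega;\mathbb{R}^d)$ satisfy $$\det\nabla y\ge\delta,\quad |\nabla y|\le M_1\ \text{ on }\Omega,\quad \|\nabla y\|_{C^\alpha(\Omega)}\le M_2.$$ Then there exists $\varrho>0$, depending only on $\delta,M_1,M_2,\alpha$ and $\Omega$, such that for every $\bar x\in\bar\Omega$, $y$ is injective on $\Omega(\bar x,\varrho):=B_\varrho(\bar x)\cap\Omega$ and $$\frac12\,\frac{\delta}{M_1^{d-1}}\,|x_1-x_2|\le|y(x_1)-y(x_2)|\le M_1\sqrt{1+L^2}\,|x_1-x_2|\quad\text{for all }x_1,x_2\in\Omega(\bar x,\varrho).$$ Moreover, the inverse $y^{-1}$ of the restriction of $y$ to $\Omega(\bar x,\varrho)$ is of class $C^{1,\alpha}$.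
   Context: "Local Lipschitz constants bounded by $L$" means: there is $R_0>0$ such that for every $x_0\in\partial\Omega$, in a cuboid containing $B_{R_0}(x_0)$, $\partial\Omega$ is the graph of a Lipschitz function with Lipschitz constant at most $L$ (with $\Omega$ on one side). Norms are Euclidean. *)

theory Defs
  imports "HOL-Analysis.Analysis"
begin

text \<open>Bounded Lipschitz domain whose local Lipschitz constants are bounded by L:
  there is R0 > 0 such that for every boundary point x0 there are an orthogonal change
  of coordinates Q, a distinguished coordinate k and a cuboid C (a box in the rotated
  coordinates centred-translated at x0) containing the ball B_R0(x0), and a function g
  of the remaining d-1 coordinates with Lipschitz constant at most L, such that inside
  C the set Omega is exactly the region below the graph of g (so the boundary in C is
  the graph of g).\<close>
definition lipschitz_domain_bound :: "(real^'n) set \<Rightarrow> real \<Rightarrow> bool" where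
  "lipschitz_domain_bound \<Omega> L \<longleftrightarrow>
     open \<Omega> \<and> connected \<Omega> \<and> bounded \<Omega> \<and> \<Omega> \<noteq> {} \<and>
     (\<exists>R0>0. \<forall>x0\<in>frontier \<Omega>.
        \<exists>(Q :: real^'n \<Rightarrow> real^'n) (k :: 'n) (a :: real^'n) (b :: real^'n) (g :: real^'n \<Rightarrow> real).
          orthogonal_transformation Q \<and>
          ball x0 R0 \<subseteq> {x. Q (x - x0) \<in> box a b} \<and>
          (\<forall>u v. (\<forall>i. i \<noteq> k \<longrightarrow> u$i = v$i) \<longrightarrow> g u = g v) \<and>
          lipschitz_on L UNIV g \<and>
          \<Omega> \<inter> {x. Q (x - x0) \<in> box a b} =
            {x. Q (x - x0) \<in> box a b \<and> (Q (x - x0))$k < g (Q (x - x0))})"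

definition holder_norm_le :: "('a::metric_space) set \<Rightarrow> ('a \<Rightarrow> 'b::real_normed_vector) \<Rightarrow> real \<Rightarrow> real \<Rightarrow> bool" where
  "holder_norm_le U F \<alpha> M \<longleftrightarrow>
     (\<exists>A B. A + B \<le> M \<and> (\<forall>x\<in>U. norm (F x) \<le> A) \<and>
        (\<forall>x\<in>U. \<forall>z\<in>U. norm (F x - F z) \<le> B * dist x z powr \<alpha>))"

definition C1_alpha :: "(real^'n) set \<Rightarrow> (real^'n \<Rightarrow> real^'m) \<Rightarrow> real \<Rightarrow> bool" where
  "C1_alpha U f \<alpha> \<longleftrightarrow>
     (\<exists>f'. (\<forall>x\<in>U. (f has_derivative f' x) (at x)) \<and>
        (\<exists>M. holder_norm_le U (\<lambda>x. matrix (f' x)) \<alpha> M))"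

end

(*
  At every point of Omega the derivative A = Dy satisfies |A h| >= m |h| with
  m = delta / M1^(d-1): after a rotation taking h/|h| to a basis vector, Hadamard's
  inequality bounds det A by |A h|/|h| times d - 1 column norms, each at most M1.

  Two points of Omega near a point of the closure are joined inside Omega by a path of
  length at most sqrt(1 + L^2) times their distance, staying in a ball of radius C rho:
  the segment itself away from the boundary, and near the boundary the segment pushed
  below the Lipschitz graph of a chart. Along this path y deviates from its
  linearisation at the starting point by at most M2 (C rho)^alpha sqrt(1 + L^2) |x1 - x2|,
  which is at most m/2 |x1 - x2| once rho is small. This gives the lower bound and
  injectivity; the upper bound is the mean value inequality along the same path.

  The inverse has derivative the inverse matrix, and A^-1 - B^-1 = A^-1 (B - A) B^-1
  together with the lower bound transfers the Hoelder bound of Dy to the inverse.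
*)

theory Submission
  imports Defs
begin

lemma norm_matrix_vector_mult_le:
  fixes A :: "real^'n^'m"
  shows "norm (A *v x) \<le> norm A * norm x"
proof -
  have "norm (A *v x) = L2_set (\<lambda>i. norm ((A *v x)$i)) UNIV"
    by (simp add: norm_vec_def)
  also have "\<dots> \<le> L2_set (\<lambda>i. norm (A$i) * norm x) UNIV"
    by (rule L2_set_mono) (simp_all add: matrix_mult_dot Cauchy_Schwarz_ineq2)
  also have "\<dots> = norm A * norm x"
    by (simp add: L2_set_left_distrib norm_vec_def)
  finally show ?thesis .
qed

lemma norm_linear_le_norm_matrix:
  fixes f :: "real^'n \<Rightarrow> real^'m"
  assumes "linear f"
  shows "norm (f h) \<le> norm (matrix f) * norm h"
  using norm_matrix_vector_mult_le[of "matrix f" h] assms by (simp add: matrix_works)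

lemma norm_matrix_le_sqrt_card_mult:
  fixes B :: "real^'n^'m"
  assumes "\<And>z. norm (B *v z) \<le> c * norm z"
  shows "norm B \<le> sqrt (CARD('n)) * c"
proof -
  have column_le: "norm (column j B) \<le> c" for j
    using assms[of "axis j 1"] by (simp add: matrix_vector_mult_basis)
  then have "0 \<le> c"
    using norm_ge_zero order_trans by blast
  have "(norm B)^2 = (\<Sum>i\<in>UNIV. \<Sum>j\<in>UNIV. (B$i$j)^2)"
    unfolding power2_norm_eq_inner inner_vec_def by (simp add: power2_eq_square)
  also have "\<dots> = (\<Sum>j\<in>UNIV. \<Sum>i\<in>UNIV. (B$i$j)^2)"
    by (rule sum.swap)
  also have "\<dots> = (\<Sum>j\<in>UNIV. (norm (column j B))^2)"
    unfolding power2_norm_eq_inner inner_vec_def column_def by (simp add: power2_eq_square)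
  also have "\<dots> \<le> (\<Sum>j\<in>(UNIV::'n set). c^2)"
    by (rule sum_mono) (simp add: column_le power_mono)
  also have "\<dots> = (sqrt (CARD('n)) * c)^2"
    by (simp add: power_mult_distrib)
  finally show ?thesis
    by (rule power2_le_imp_le) (simp add: \<open>0 \<le> c\<close>)
qed

section \<open>Hadamard's inequality and a lower bound for invertible matrices\<close>

lemma orthogonalise_row:
  fixes C :: "real^'n^'n"
  assumes "j \<notin> S"
  obtains C' where "det C' = det C" "norm (row j C') \<le> norm (row j C)"
    "\<And>i. i \<noteq> j \<Longrightarrow> row i C' = row i C" "\<And>i. i \<in> S \<Longrightarrow> row j C' \<bullet> row i C = 0"
proof -
  define T where "T = {row i C |i. i \<in> S}"
  obtain p z where p: "p \<in> span T" and z: "\<And>w. w \<in> span T \<Longrightarrow> orthogonal z w"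
    and decomp: "row j C = p + z"
    using orthogonal_subspace_decomp_exists by blast
  define C' where "C' = (\<chi> i. if i = j then row j C + - p else row i C)"
  have "span T \<subseteq> span {row i C |i. i \<noteq> j}"
    by (rule span_mono) (use assms in \<open>auto simp: T_def\<close>)
  then have "- p \<in> vec.span {row i C |i. i \<noteq> j}"
    using p span_neg unfolding span_vec_eq by blast
  then have "det C' = det C"
    unfolding C'_def by (rule det_row_span)
  moreover have "norm z \<le> norm (row j C)"
  proof -
    have "(norm (row j C))^2 = (norm p)^2 + (norm z)^2"
      using decomp z[OF p] norm_add_Pythagorean by (metis add.commute orthogonal_commute)
    then show ?thesis
      using power2_le_imp_le[of "norm z" "norm (row j C)"] by simp
  qed
  moreover have "z \<bullet> row i C = 0" if "i \<in> S" for i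
  proof -
    have "row i C \<in> span T"
      using that by (auto simp: T_def intro: span_base)
    then show ?thesis
      using z by (simp add: orthogonal_def)
  qed
  moreover have "row i C' = (if i = j then z else row i C)" for i
    using decomp by (simp add: C'_def row_def vec_eq_iff)
  ultimately show ?thesis
    by (intro that[of C']) simp_all
qed

lemma exists_orthogonal_rows_same_det:
  fixes A :: "real^'n^'n"
  obtains C where "det C = det A" "\<And>i. norm (row i C) \<le> norm (row i A)"
    "\<And>i j. i \<noteq> j \<Longrightarrow> row i C \<bullet> row j C = 0"
proof -
  have "\<exists>C::real^'n^'n. det C = det A \<and> (\<forall>i. norm (row i C) \<le> norm (row i A)) \<and>
     (\<forall>i\<in>S. \<forall>j\<in>S. i \<noteq> j \<longrightarrow> row i C \<bullet> row j C = 0)" for S :: "'n set"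
  proof (induction S rule: finite_induct[OF finite])
    case 1
    show ?case by auto
  next
    case (2 j S)
    then obtain C :: "real^'n^'n" where C: "det C = det A" "\<forall>i. norm (row i C) \<le> norm (row i A)"
      "\<forall>i\<in>S. \<forall>k\<in>S. i \<noteq> k \<longrightarrow> row i C \<bullet> row k C = 0"
      by blast
    obtain C' where C': "det C' = det C" "norm (row j C') \<le> norm (row j C)"
      "\<And>i. i \<noteq> j \<Longrightarrow> row i C' = row i C" "\<And>i. i \<in> S \<Longrightarrow> row j C' \<bullet> row i C = 0"
      using orthogonalise_row[OF \<open>j \<notin> S\<close>] by blast
    have "\<forall>i. norm (row i C') \<le> norm (row i A)"
      using C(2) C'(2,3) by (metis order_trans)
    moreover have "\<forall>i\<in>insert j S. \<forall>k\<in>insert j S. i \<noteq> k \<longrightarrow> row i C' \<bullet> row k C' = 0"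
      using C(3) C'(3,4) \<open>j \<notin> S\<close> by (metis inner_commute insert_iff)
    ultimately show ?case
      using C(1) C'(1) by auto
  qed
  from this[of UNIV] show ?thesis
    using that by blast
qed

lemma abs_det_le_prod_norm_rows:
  fixes A :: "real^'n^'n"
  shows "\<bar>det A\<bar> \<le> (\<Prod>i\<in>UNIV. norm (row i A))"
proof -
  obtain C where C: "det C = det A" "\<And>i. norm (row i C) \<le> norm (row i A)"
    "\<And>i j. i \<noteq> j \<Longrightarrow> row i C \<bullet> row j C = 0"
    using exists_orthogonal_rows_same_det by blast
  have "(det A)^2 = det (C ** transpose C)"
    by (simp add: det_mul det_transpose C(1) power2_eq_square)
  also have "\<dots> = (\<Prod>i\<in>UNIV. (norm (row i C))^2)"
    unfolding matrix_mult_transpose_dot_row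
    by (subst det_diagonal) (simp_all add: C(3) power2_norm_eq_inner)
  also have "\<dots> \<le> (\<Prod>i\<in>UNIV. (norm (row i A))^2)"
    by (rule prod_mono) (simp add: C(2) power_mono)
  also have "\<dots> = (\<Prod>i\<in>UNIV. norm (row i A))^2"
    by (simp add: prod_power_distrib)
  finally show ?thesis
    by (simp add: abs_le_square_iff[symmetric] prod_nonneg)
qed

lemma abs_det_le_prod_norm_columns:
  fixes A :: "real^'n^'n"
  shows "\<bar>det A\<bar> \<le> (\<Prod>i\<in>UNIV. norm (column i A))"
  using abs_det_le_prod_norm_rows[of "transpose A"] by (simp add: det_transpose row_transpose)

lemma abs_det_mult_norm_le:
  fixes A :: "real^'n^'n"
  assumes "norm A \<le> M"
  shows "\<bar>det A\<bar> * norm z \<le> M^(CARD('n) - 1) * norm (A *v z)"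
proof -
  have unit: "\<bar>det A\<bar> \<le> M^(CARD('n) - 1) * norm (A *v e)" if "norm e = 1" for e
  proof -
    define i0 :: 'n where "i0 = undefined"
    obtain U where U: "orthogonal_matrix U" "U *v axis i0 1 = e"
      using orthogonal_matrix_exists_basis[OF \<open>norm e = 1\<close>] by metis
    define B where "B = A ** U"
    have column_B: "column i B = A *v (U *v axis i 1)" for i
      by (simp add: B_def column_def matrix_matrix_mult_def matrix_vector_mult_def vec_eq_iff
          axis_def if_distrib cong: if_cong)
    have "norm (U *v axis i 1) = 1" for i
      using U(1) orthogonal_transformation_norm orthogonal_transformation_matrix by fastforce
    then have column_le: "norm (column i B) \<le> M" for i
      using norm_matrix_vector_mult_le[of A "U *v axis i 1"] assms by (simp add: column_B)
    have "\<bar>det A\<bar> = \<bar>det B\<bar>"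
      using det_orthogonal_matrix[OF U(1)] by (auto simp: B_def det_mul abs_mult)
    also have "\<dots> \<le> (\<Prod>i\<in>UNIV. norm (column i B))"
      by (rule abs_det_le_prod_norm_columns)
    also have "\<dots> = norm (column i0 B) * (\<Prod>i\<in>UNIV - {i0}. norm (column i B))"
      by (simp add: prod.remove)
    also have "\<dots> \<le> norm (A *v e) * M^(CARD('n) - 1)"
    proof (rule mult_mono)
      show "norm (column i0 B) \<le> norm (A *v e)"
        by (simp add: column_B U(2))
      have "(\<Prod>i\<in>UNIV - {i0}. norm (column i B)) \<le> (\<Prod>i\<in>UNIV - {i0}. M)"
        by (rule prod_mono) (simp add: column_le)
      then show "(\<Prod>i\<in>UNIV - {i0}. norm (column i B)) \<le> M^(CARD('n) - 1)"
        by (simp add: card_Diff_singleton)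
    qed (simp_all add: prod_nonneg)
    finally show ?thesis
      by (simp add: mult.commute)
  qed
  show ?thesis
  proof (cases "z = 0")
    case False
    have "\<bar>det A\<bar> * norm z \<le> M^(CARD('n) - 1) * norm (A *v (z /\<^sub>R norm z)) * norm z"
      using unit[of "z /\<^sub>R norm z"] False by (simp add: mult_right_mono)
    also have "\<dots> = M^(CARD('n) - 1) * norm (A *v z)"
      using False by (simp add: matrix_vector_mult_scaleR)
    finally show ?thesis .
  qed simp
qed

lemma norm_matrix_vector_mult_ge_det:
  fixes A :: "real^'n^'n"
  assumes "norm A \<le> M" "\<delta> \<le> det A" "0 < M"
  shows "\<delta> / M^(CARD('n) - 1) * norm h \<le> norm (A *v h)"
proof -
  have "\<delta> * norm h \<le> \<bar>det A\<bar> * norm h"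
    using assms(2) by (simp add: mult_right_mono)
  also have "\<dots> \<le> M^(CARD('n) - 1) * norm (A *v h)"
    using assms(1) by (rule abs_det_mult_norm_le)
  finally show ?thesis
    using \<open>0 < M\<close> by (simp add: divide_simps mult.commute)
qed

lemma matrix_inv:
  fixes A :: "'a::field^'n^'n"
  assumes "invertible A"
  shows matrix_inv_right: "A ** matrix_inv A = mat 1"
    and matrix_inv_left: "matrix_inv A ** A = mat 1"
proof -
  have "A ** matrix_inv A = mat 1 \<and> matrix_inv A ** A = mat 1"
    using assms unfolding matrix_inv_def invertible_def by (rule someI_ex)
  then show "A ** matrix_inv A = mat 1" "matrix_inv A ** A = mat 1"
    by auto
qed

lemma norm_matrix_inv_mult_le:
  fixes A :: "real^'n^'n"
  assumes "invertible A" "0 < m" "\<And>h. m * norm h \<le> norm (A *v h)"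
  shows "norm (matrix_inv A *v z) \<le> norm z / m"
  using assms(3)[of "matrix_inv A *v z"] assms(2)
  by (simp add: matrix_vector_mul_assoc matrix_inv_right[OF assms(1)] pos_le_divide_eq mult.commute)

lemma matrix_mul_diff_distrib:
  fixes A :: "'a::ring_1^'n^'m"
  shows matrix_mul_diff_ldistrib: "A ** (B - C) = A ** B - A ** C"
    and matrix_mul_diff_rdistrib: "(B - C) ** D = B ** D - C ** D"
  by (simp_all add: matrix_matrix_mult_def vec_eq_iff sum_subtractf algebra_simps)

lemma matrix_inv_diff:
  fixes A B :: "real^'n^'n"
  assumes "invertible A" "invertible B"
  shows "matrix_inv A - matrix_inv B = matrix_inv A ** (B - A) ** matrix_inv B"
proof -
  have "matrix_inv A ** (B - A) ** matrix_inv B =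
      matrix_inv A ** (B ** matrix_inv B) - (matrix_inv A ** A) ** matrix_inv B"
    by (simp add: matrix_mul_diff_distrib matrix_mul_assoc)
  then show ?thesis
    using assms by (simp add: matrix_inv)
qed

lemma norm_matrix_inv_diff_le:
  fixes A B :: "real^'n^'n"
  assumes "invertible A" "invertible B" "0 < m"
    and "\<And>h. m * norm h \<le> norm (A *v h)" "\<And>h. m * norm h \<le> norm (B *v h)"
  shows "norm (matrix_inv A - matrix_inv B) \<le> sqrt (CARD('n)) * (norm (A - B) / m^2)"
proof (rule norm_matrix_le_sqrt_card_mult)
  fix z
  have "norm ((matrix_inv A - matrix_inv B) *v z) = norm (matrix_inv A *v ((B - A) *v (matrix_inv B *v z)))"
    by (simp add: matrix_inv_diff[OF assms(1,2)] matrix_vector_mul_assoc matrix_mul_assoc)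
  also have "\<dots> \<le> norm ((B - A) *v (matrix_inv B *v z)) / m"
    by (rule norm_matrix_inv_mult_le) (use assms in auto)
  also have "\<dots> \<le> norm (B - A) * (norm z / m) / m"
  proof (rule divide_right_mono)
    have "norm ((B - A) *v (matrix_inv B *v z)) \<le> norm (B - A) * norm (matrix_inv B *v z)"
      by (rule norm_matrix_vector_mult_le)
    also have "\<dots> \<le> norm (B - A) * (norm z / m)"
      by (rule mult_left_mono[OF norm_matrix_inv_mult_le[OF assms(2,3,5)]]) simp
    finally show "norm ((B - A) *v (matrix_inv B *v z)) \<le> norm (B - A) * (norm z / m)" .
  qed (use assms in simp)
  also have "\<dots> = norm (A - B) / m^2 * norm z"
    by (simp add: norm_minus_commute power2_eq_square)
  finally show "norm ((matrix_inv A - matrix_inv B) *v z) \<le> norm (A - B) / m^2 * norm z" .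
qed

section \<open>Estimates along Lipschitz paths\<close>

lemma norm_diff_le_in_ball:
  fixes f :: "'a::real_normed_vector \<Rightarrow> 'b::real_normed_vector"
  assumes "ball a \<epsilon> \<subseteq> S" "b \<in> ball a \<epsilon>"
    and der: "\<And>x. x \<in> S \<Longrightarrow> (f has_derivative f' x) (at x)"
    and bound: "\<And>x h. x \<in> S \<Longrightarrow> norm (f' x h) \<le> K * norm h" and "0 \<le> K"
  shows "norm (f b - f a) \<le> K * norm (b - a)"
proof (rule differentiable_bound[OF convex_ball])
  show "(f has_derivative f' x) (at x within ball a \<epsilon>)" if "x \<in> ball a \<epsilon>" for x
    using der \<open>ball a \<epsilon> \<subseteq> S\<close> that has_derivative_at_withinI by blast
  show "onorm (f' x) \<le> K" if "x \<in> ball a \<epsilon>" for x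
  proof (rule onorm_bound)
    show "norm (f' x h) \<le> K * norm h" for h
      using bound \<open>ball a \<epsilon> \<subseteq> S\<close> that by blast
  qed fact
  show "a \<in> ball a \<epsilon>"
    using \<open>b \<in> ball a \<epsilon>\<close> by (metis centre_in_ball ball_eq_empty empty_iff not_less)
qed (use \<open>b \<in> ball a \<epsilon>\<close> in simp)

lemma norm_diff_le_along_lipschitz_path:
  fixes f :: "'a::real_normed_vector \<Rightarrow> 'b::real_normed_vector" and p :: "real \<Rightarrow> 'a"
  assumes "open S"
    and der: "\<And>x. x \<in> S \<Longrightarrow> (f has_derivative f' x) (at x)"
    and bound: "\<And>x h. x \<in> S \<Longrightarrow> norm (f' x h) \<le> K * norm h"
    and "0 \<le> K" and path: "p ` {0..1} \<subseteq> S" and lip: "lipschitz_on \<Lambda> {0..1} p"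
  shows "norm (f (p 1) - f (p 0)) \<le> K * \<Lambda>"
proof -
  have "compact (p ` {0..1})"
    using lip by (intro compact_continuous_image lipschitz_on_continuous_on) (auto simp: compact_Icc)
  then obtain \<epsilon> where "\<epsilon> > 0" and balls: "(\<Union>x\<in>p ` {0..1}. ball x \<epsilon>) \<subseteq> S"
    using compact_subset_open_imp_ball_epsilon_subset[OF _ \<open>open S\<close> path] by metis
  obtain N :: nat where N: "\<Lambda> / \<epsilon> < N"
    using reals_Archimedean2 by blast
  have "0 \<le> \<Lambda> / \<epsilon>"
    using lipschitz_on_nonneg[OF lip] \<open>\<epsilon> > 0\<close> by simp
  then have "0 < N"
    using N by simp
  have "\<Lambda> / N < \<epsilon>"
    using N \<open>0 < N\<close> \<open>\<epsilon> > 0\<close> by (simp add: divide_less_eq mult.commute)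
  have step: "norm (f (p (Suc j / N)) - f (p (j / N))) \<le> K * (\<Lambda> / N)" if "j < N" for j
  proof -
    define a b where "a = p (j / N)" and "b = p (Suc j / N)"
    have "j / N \<in> {0..1}" "Suc j / N \<in> {0..1}"
      using that by auto
    then have "dist b a \<le> \<Lambda> * dist (Suc j / N) (j / N)"
      unfolding a_def b_def by (intro lipschitz_onD[OF lip])
    also have "dist (Suc j / N) (j / N) = 1 / N"
      by (simp add: dist_real_def diff_divide_distrib[symmetric])
    finally have "dist b a \<le> \<Lambda> / N"
      by simp
    txt \<open>Consecutive points of the subdivision lie in a common ball inside S, where the
      mean value inequality applies.\<close>
    have "ball a \<epsilon> \<subseteq> S"
      using balls \<open>j / N \<in> {0..1}\<close> unfolding a_def by blast
    moreover have "b \<in> ball a \<epsilon>"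
      using \<open>dist b a \<le> \<Lambda> / N\<close> \<open>\<Lambda> / N < \<epsilon>\<close> by (simp add: dist_commute)
    ultimately have "norm (f b - f a) \<le> K * norm (b - a)"
      using der bound \<open>0 \<le> K\<close> by (rule norm_diff_le_in_ball)
    also have "\<dots> \<le> K * (\<Lambda> / N)"
      using mult_left_mono[OF \<open>dist b a \<le> \<Lambda> / N\<close> \<open>0 \<le> K\<close>] by (simp add: dist_norm)
    finally show ?thesis
      by (simp add: a_def b_def)
  qed
  have "f (p 1) - f (p 0) = (\<Sum>j<N. f (p (Suc j / N)) - f (p (j / N)))"
    using sum_lessThan_telescope[of "\<lambda>j. f (p (j / N))" N] \<open>0 < N\<close> by simp
  also have "norm \<dots> \<le> (\<Sum>j<N. K * (\<Lambda> / N))"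
    by (rule order_trans[OF norm_sum sum_mono], rule step) simp
  also have "\<dots> = K * \<Lambda>"
    using \<open>0 < N\<close> by simp
  finally show ?thesis .
qed

lemma dist_le_along_lipschitz_path:
  fixes y :: "real^'n \<Rightarrow> real^'m" and p :: "real \<Rightarrow> real^'n"
  assumes "open S" and der: "\<And>x. x \<in> S \<Longrightarrow> (y has_derivative y' x) (at x)"
    and bound: "\<And>x. x \<in> S \<Longrightarrow> norm (matrix (y' x)) \<le> M"
    and "p ` {0..1} \<subseteq> S" "lipschitz_on \<Lambda> {0..1} p"
  shows "dist (y (p 0)) (y (p 1)) \<le> M * \<Lambda>"
proof -
  have "p 0 \<in> S"
    using \<open>p ` {0..1} \<subseteq> S\<close> by auto
  then have "0 \<le> M"
    using bound norm_ge_zero order_trans by blast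
  have "norm (y' x h) \<le> M * norm h" if "x \<in> S" for x h
    using norm_linear_le_norm_matrix[OF has_derivative_linear[OF der[OF that]], of h]
      mult_right_mono[OF bound[OF that] norm_ge_zero[of h]] by linarith
  then show ?thesis
    using norm_diff_le_along_lipschitz_path[OF \<open>open S\<close> der _ \<open>0 \<le> M\<close> assms(4,5)]
    by (simp add: dist_norm norm_minus_commute)
qed

lemma dist_ge_along_lipschitz_path:
  fixes y :: "real^'n \<Rightarrow> real^'m" and p :: "real \<Rightarrow> real^'n"
  assumes "open S" and der: "\<And>x. x \<in> S \<Longrightarrow> (y has_derivative y' x) (at x)"
    and lower: "\<And>h. m * norm h \<le> norm (A *v h)"
    and close: "\<And>x. x \<in> S \<Longrightarrow> norm (matrix (y' x) - A) \<le> \<epsilon>"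
    and "p ` {0..1} \<subseteq> S" "lipschitz_on \<Lambda> {0..1} p"
  shows "m * dist (p 0) (p 1) - \<epsilon> * \<Lambda> \<le> dist (y (p 0)) (y (p 1))"
proof -
  have "p 0 \<in> S"
    using \<open>p ` {0..1} \<subseteq> S\<close> by auto
  then have "0 \<le> \<epsilon>"
    using close norm_ge_zero order_trans by blast
  define f where "f x = y x - A *v x" for x
  have f_der: "(f has_derivative (\<lambda>h. y' x h - A *v h)) (at x)" if "x \<in> S" for x
    unfolding f_def by (intro has_derivative_diff der[OF that] bounded_linear_imp_has_derivative)
      (simp add: matrix_vector_mul_bounded_linear)
  have f_der_bound: "norm (y' x h - A *v h) \<le> \<epsilon> * norm h" if "x \<in> S" for x h
  proof -
    have "y' x h = matrix (y' x) *v h"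
      by (simp add: matrix_works has_derivative_linear[OF der[OF that]])
    then have "norm (y' x h - A *v h) \<le> norm (matrix (y' x) - A) * norm h"
      by (simp add: norm_matrix_vector_mult_le flip: matrix_vector_mult_diff_rdistrib)
    then show ?thesis
      using mult_right_mono[OF close[OF that] norm_ge_zero[of h]] by linarith
  qed
  have "norm (f (p 1) - f (p 0)) \<le> \<epsilon> * \<Lambda>"
    by (rule norm_diff_le_along_lipschitz_path[OF \<open>open S\<close> f_der f_der_bound \<open>0 \<le> \<epsilon>\<close> assms(5,6)])
  moreover have "m * dist (p 0) (p 1) \<le> norm (A *v (p 1 - p 0))"
    using lower[of "p 1 - p 0"] by (simp add: dist_norm norm_minus_commute)
  moreover have "A *v (p 1 - p 0) = (y (p 1) - y (p 0)) - (f (p 1) - f (p 0))"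
    by (simp add: f_def matrix_vector_mult_diff_distrib)
  ultimately show ?thesis
    using norm_triangle_ineq4[of "y (p 1) - y (p 0)" "f (p 1) - f (p 0)"]
    by (simp add: dist_norm norm_minus_commute)
qed

lemma bi_lipschitz_along_path:
  fixes y :: "real^'n \<Rightarrow> real^'m" and p :: "real \<Rightarrow> real^'n"
  assumes "open \<Omega>" and der: "\<And>x. x \<in> \<Omega> \<Longrightarrow> (y has_derivative y' x) (at x)"
    and bound: "\<And>x. x \<in> \<Omega> \<Longrightarrow> norm (matrix (y' x)) \<le> M"
    and lower: "\<And>x h. x \<in> \<Omega> \<Longrightarrow> m * norm h \<le> norm (matrix (y' x) *v h)"
    and holder: "\<And>x z. x \<in> \<Omega> \<Longrightarrow> z \<in> \<Omega> \<Longrightarrow>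
      norm (matrix (y' x) - matrix (y' z)) \<le> H * dist x z powr \<alpha>"
    and "0 \<le> H" "0 \<le> \<alpha>" and small: "H * r powr \<alpha> * \<Lambda> \<le> m / 2"
    and p: "p 0 = x1" "p 1 = x2" "p ` {0..1} \<subseteq> \<Omega> \<inter> ball x1 r"
      "lipschitz_on (\<Lambda> * dist x1 x2) {0..1} p"
  shows "m / 2 * dist x1 x2 \<le> dist (y x1) (y x2)" "dist (y x1) (y x2) \<le> M * \<Lambda> * dist x1 x2"
proof -
  have "x1 \<in> \<Omega>"
    using p(1,3) by force
  have "dist (y (p 0)) (y (p 1)) \<le> M * (\<Lambda> * dist x1 x2)"
    using p(3,4) by (intro dist_le_along_lipschitz_path[OF \<open>open \<Omega>\<close> der bound]) auto
  then show "dist (y x1) (y x2) \<le> M * \<Lambda> * dist x1 x2"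
    using p(1,2) by (simp add: mult.assoc)
  have "norm (matrix (y' x) - matrix (y' x1)) \<le> H * r powr \<alpha>" if "x \<in> \<Omega> \<inter> ball x1 r" for x
  proof -
    have "norm (matrix (y' x) - matrix (y' x1)) \<le> H * dist x x1 powr \<alpha>"
      using holder[of x x1] that \<open>x1 \<in> \<Omega>\<close> by blast
    also have "\<dots> \<le> H * r powr \<alpha>"
      using that \<open>0 \<le> \<alpha>\<close> \<open>0 \<le> H\<close> by (intro mult_left_mono powr_mono2) (auto simp: dist_commute)
    finally show ?thesis .
  qed
  then have "m * dist (p 0) (p 1) - H * r powr \<alpha> * (\<Lambda> * dist x1 x2) \<le> dist (y (p 0)) (y (p 1))"
    using p(3,4) lower[OF \<open>x1 \<in> \<Omega>\<close>]
    by (intro dist_ge_along_lipschitz_path[OF open_Int[OF \<open>open \<Omega>\<close> open_ball]]) (auto intro: der)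
  moreover have "H * r powr \<alpha> * (\<Lambda> * dist x1 x2) \<le> m / 2 * dist x1 x2"
    using mult_right_mono[OF small zero_le_dist[of x1 x2]] by (simp add: mult.assoc)
  ultimately show "m / 2 * dist x1 x2 \<le> dist (y x1) (y x2)"
    using p(1,2) by simp
qed

section \<open>The inverse of a bi-Lipschitz map with Hoelder derivative\<close>

lemma holder_norm_leD:
  assumes "holder_norm_le U F \<alpha> M" "x \<in> U" "z \<in> U"
  shows "norm (F x - F z) \<le> M * dist x z powr \<alpha>"
proof -
  obtain A B where "A + B \<le> M" "norm (F x) \<le> A"
    and "norm (F x - F z) \<le> B * dist x z powr \<alpha>"
    using assms unfolding holder_norm_le_def by blast
  moreover have "B \<le> M"
    using calculation norm_ge_zero[of "F x"] by linarith
  ultimately show ?thesis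
    by (meson mult_right_mono order_trans powr_ge_zero)
qed

lemma has_derivative_the_inv_into:
  fixes y :: "real^'n \<Rightarrow> real^'n"
  assumes "open U" "inj_on y U" and der: "\<And>x. x \<in> U \<Longrightarrow> (y has_derivative y' x) (at x)"
    and "invertible (matrix (y' x))" "x \<in> U"
  shows "(the_inv_into U y has_derivative (\<lambda>h. matrix_inv (matrix (y' x)) *v h)) (at (y x))"
proof (rule has_derivative_inverse_strong[OF \<open>open U\<close> \<open>x \<in> U\<close>])
  show "continuous_on U y"
    using der by (meson continuous_at_imp_continuous_on has_derivative_continuous)
  show "the_inv_into U y (y z) = z" if "z \<in> U" for z
    using the_inv_into_f_f[OF \<open>inj_on y U\<close> that] .
  show "(y has_derivative y' x) (at x)"
    using der \<open>x \<in> U\<close> .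
  then have "y' x h = matrix (y' x) *v h" for h
    by (simp add: matrix_works has_derivative_linear)
  then show "y' x \<circ> (\<lambda>h. matrix_inv (matrix (y' x)) *v h) = id"
    by (simp add: fun_eq_iff matrix_vector_mul_assoc
        matrix_inv_right[OF \<open>invertible (matrix (y' x))\<close>])
qed

lemma C1_alpha_the_inv_into:
  fixes y :: "real^'n \<Rightarrow> real^'n"
  assumes "open U" "inj_on y U" and der: "\<And>x. x \<in> U \<Longrightarrow> (y has_derivative y' x) (at x)"
    and inv: "\<And>x. x \<in> U \<Longrightarrow> invertible (matrix (y' x))"
    and "0 < m" and lower: "\<And>x h. x \<in> U \<Longrightarrow> m * norm h \<le> norm (matrix (y' x) *v h)"
    and holder: "\<And>x z. x \<in> U \<Longrightarrow> z \<in> U \<Longrightarrow>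
      norm (matrix (y' x) - matrix (y' z)) \<le> M * dist x z powr \<alpha>"
    and "0 < c" and bi_lipschitz: "\<And>x z. x \<in> U \<Longrightarrow> z \<in> U \<Longrightarrow> c * dist x z \<le> dist (y x) (y z)"
    and "0 \<le> \<alpha>" "0 \<le> M"
  shows "C1_alpha (y ` U) (the_inv_into U y) \<alpha>"
proof -
  define Bi where "Bi x = matrix_inv (matrix (y' x))" for x
  define G' where "G' v = (\<lambda>h. Bi (the_inv_into U y v) *v h)" for v
  have inv_y: "the_inv_into U y (y x) = x" if "x \<in> U" for x
    using the_inv_into_f_f[OF \<open>inj_on y U\<close> that] .
  define H where "H = sqrt (CARD('n)) * (M / m^2) * (1 / c) powr \<alpha>"
  have deriv: "(the_inv_into U y has_derivative G' v) (at v)" if "v \<in> y ` U" for v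
    using that has_derivative_the_inv_into[OF \<open>open U\<close> \<open>inj_on y U\<close> der inv]
    by (auto simp: G'_def Bi_def inv_y)
  have sup: "norm (Bi x) \<le> sqrt (CARD('n)) * (1 / m)" if "x \<in> U" for x
    using norm_matrix_inv_mult_le[OF inv \<open>0 < m\<close> lower] that
    unfolding Bi_def by (intro norm_matrix_le_sqrt_card_mult) simp
  have hoelder: "norm (Bi x - Bi z) \<le> H * dist (y x) (y z) powr \<alpha>" if "x \<in> U" "z \<in> U" for x z
  proof -
    have "norm (matrix (y' x) - matrix (y' z)) \<le> M * dist x z powr \<alpha>"
      using holder[OF that] .
    also have "\<dots> \<le> M * ((1 / c) * dist (y x) (y z)) powr \<alpha>"
      using bi_lipschitz[OF that] \<open>0 < c\<close> \<open>0 \<le> \<alpha>\<close> \<open>0 \<le> M\<close>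
      by (intro mult_left_mono powr_mono2) (auto simp: field_simps)
    also have "\<dots> = M * (1 / c) powr \<alpha> * dist (y x) (y z) powr \<alpha>"
      using \<open>0 < c\<close> by (subst powr_mult) auto
    finally have bound: "norm (matrix (y' x) - matrix (y' z)) \<le>
        M * (1 / c) powr \<alpha> * dist (y x) (y z) powr \<alpha>" .
    have "norm (Bi x - Bi z) \<le> sqrt (CARD('n)) * (norm (matrix (y' x) - matrix (y' z)) / m^2)"
      unfolding Bi_def using that by (intro norm_matrix_inv_diff_le inv lower \<open>0 < m\<close>)
    also have "\<dots> \<le> sqrt (CARD('n)) * (M * (1 / c) powr \<alpha> * dist (y x) (y z) powr \<alpha> / m^2)"
      by (rule mult_left_mono[OF divide_right_mono[OF bound]]) auto
    also have "\<dots> = H * dist (y x) (y z) powr \<alpha>"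
      by (simp add: H_def)
    finally show ?thesis .
  qed
  show ?thesis
    unfolding C1_alpha_def
  proof (intro exI conjI)
    show "\<forall>v\<in>y ` U. (the_inv_into U y has_derivative G' v) (at v)"
      using deriv by blast
    show "holder_norm_le (y ` U) (\<lambda>v. matrix (G' v)) \<alpha> (sqrt (CARD('n)) * (1 / m) + H)"
      unfolding holder_norm_le_def
    proof (intro exI conjI)
      show "\<forall>v\<in>y ` U. norm (matrix (G' v)) \<le> sqrt (CARD('n)) * (1 / m)"
        using sup by (auto simp: G'_def inv_y)
      show "\<forall>v\<in>y ` U. \<forall>w\<in>y ` U. norm (matrix (G' v) - matrix (G' w)) \<le> H * dist v w powr \<alpha>"
        using hoelder by (auto simp: G'_def inv_y)
    qed simp
  qed
qed

section \<open>Short paths in Lipschitz domains\<close>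

definition joined_by_short_paths :: "(real^'n) set \<Rightarrow> real \<Rightarrow> real \<Rightarrow> (real^'n) set \<Rightarrow> bool" where
  "joined_by_short_paths \<Omega> \<Lambda> r U \<longleftrightarrow> (\<forall>x1\<in>U. \<forall>x2\<in>U. \<exists>p :: real \<Rightarrow> real^'n.
     p 0 = x1 \<and> p 1 = x2 \<and> p ` {0..1} \<subseteq> \<Omega> \<inter> ball x1 r \<and> lipschitz_on (\<Lambda> * dist x1 x2) {0..1} p)"

definition replace_coord :: "real^'n \<Rightarrow> 'n \<Rightarrow> real \<Rightarrow> real^'n" where
  "replace_coord x k r = (\<chi> i. if i = k then r else x$i)"

lemma replace_coord_nth [simp]: "(replace_coord x k r)$i = (if i = k then r else x$i)"
  by (simp add: replace_coord_def)

lemma replace_coord_diff: "replace_coord x k r - replace_coord y k s = replace_coord (x - y) k (r - s)"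
  by (simp add: vec_eq_iff)

lemma replace_coord_scaleR: "replace_coord (a *\<^sub>R x) k (a * r) = a *\<^sub>R replace_coord x k r"
  by (simp add: vec_eq_iff)

lemma replace_coord_replace_coord [simp]:
  "replace_coord (replace_coord x k r) k s = replace_coord x k s"
  by (simp add: vec_eq_iff)

lemma norm_replace_coord_sub: "norm (replace_coord x k r - x) = \<bar>r - x$k\<bar>"
proof -
  have "replace_coord x k r - x = (r - x$k) *\<^sub>R axis k 1"
    by (simp add: vec_eq_iff axis_def)
  then show ?thesis
    by simp
qed

lemma norm_sq_replace_coord: "(norm x)^2 = (norm (replace_coord x k 0))^2 + (x$k)^2"
proof -
  have sum_sq: "(norm y)^2 = (\<Sum>i\<in>UNIV. (y$i)^2)" for y :: "real^'n"
    unfolding power2_norm_eq_inner inner_vec_def by (simp add: power2_eq_square)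
  have "(\<Sum>i\<in>UNIV. (x$i)^2) = (x$k)^2 + (\<Sum>i\<in>UNIV - {k}. (x$i)^2)"
    by (simp add: sum.remove)
  moreover have "(\<Sum>i\<in>UNIV. ((replace_coord x k 0)$i)^2) = (\<Sum>i\<in>UNIV - {k}. (x$i)^2)"
    by (simp add: sum.remove[of UNIV k])
  ultimately show ?thesis
    unfolding sum_sq by simp
qed

lemma abs_min_diff_le:
  fixes a b c d :: real
  shows "\<bar>min a b - min c d\<bar> \<le> max \<bar>a - c\<bar> \<bar>b - d\<bar>"
  by (simp add: min_def max_def abs_if)

lemma abs_diff_le_norm_replace_coord:
  assumes "\<forall>u v. (\<forall>i. i \<noteq> k \<longrightarrow> u$i = v$i) \<longrightarrow> g u = g v" "lipschitz_on L UNIV g"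
  shows "\<bar>g x - g y\<bar> \<le> L * norm (replace_coord (x - y) k 0)"
proof -
  have "g (replace_coord x k (y$k)) = g x"
    using assms(1) by simp
  moreover have "replace_coord x k (y$k) - y = replace_coord (x - y) k 0"
    by (simp add: vec_eq_iff)
  ultimately show ?thesis
    using lipschitz_on_normD[OF assms(2), of "replace_coord x k (y$k)" y] by simp
qed

definition pushed_segment ::
    "(real^'n \<Rightarrow> real) \<Rightarrow> 'n \<Rightarrow> real \<Rightarrow> real^'n \<Rightarrow> real^'n \<Rightarrow> real \<Rightarrow> real^'n" where
  "pushed_segment g k c u v t =
     (let s = u + t *\<^sub>R (v - u) in replace_coord s k (min (s$k) (g s - c)))"

lemma pushed_segment_below:
  assumes "\<forall>u v. (\<forall>i. i \<noteq> k \<longrightarrow> u$i = v$i) \<longrightarrow> g u = g v" "0 < c"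
  shows "(pushed_segment g k c u v t)$k < g (pushed_segment g k c u v t)"
proof -
  have "g (replace_coord x k r) = g x" for x r
    using assms(1) by simp
  then show ?thesis
    using assms(2) by (simp add: pushed_segment_def Let_def)
qed

lemma lipschitz_on_pushed_segment:
  assumes g_indep: "\<forall>u v. (\<forall>i. i \<noteq> k \<longrightarrow> u$i = v$i) \<longrightarrow> g u = g v"
    and g_lip: "lipschitz_on L UNIV g"
  shows "lipschitz_on (sqrt (1 + L^2) * dist u v) S (pushed_segment g k c u v)"
proof (rule lipschitz_onI)
  fix s t :: real
  define w w' where "w = v - u" and "w' = replace_coord (v - u) k 0"
  have "dist u v = norm w"
    unfolding w_def by (metis dist_commute dist_norm)
  define seg where "seg t = u + t *\<^sub>R w" for t
  define m where "m t = min ((seg t)$k) (g (seg t) - c)" for t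
  have q: "pushed_segment g k c u v t = replace_coord (seg t) k (m t)" for t
    by (simp add: pushed_segment_def Let_def seg_def m_def w_def)
  define X Y where "X = \<bar>s - t\<bar> * \<bar>w$k\<bar>" and "Y = L * (\<bar>s - t\<bar> * norm w')"
  have "\<bar>(seg s)$k - (seg t)$k\<bar> = X"
    by (simp add: X_def seg_def algebra_simps abs_mult[symmetric])
  moreover have "replace_coord (seg s - seg t) k 0 = (s - t) *\<^sub>R w'"
    by (simp add: vec_eq_iff seg_def w_def w'_def algebra_simps)
  then have "\<bar>g (seg s) - g (seg t)\<bar> \<le> Y"
    using abs_diff_le_norm_replace_coord[OF g_indep g_lip, of "seg s" "seg t"] by (simp add: Y_def)
  ultimately have "\<bar>m s - m t\<bar> \<le> max X Y"
    using abs_min_diff_le[of "(seg s)$k" "g (seg s) - c" "(seg t)$k" "g (seg t) - c"]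
    unfolding m_def by (simp add: order_trans[OF _ max.mono])
  then have "(m s - m t)^2 \<le> (max X Y)^2"
    by (simp add: X_def abs_le_square_iff[symmetric] le_max_iff_disj)
  also have "\<dots> \<le> X^2 + Y^2"
    by (simp add: max_def)
  finally have m_diff: "(m s - m t)^2 \<le> (s - t)^2 * (w$k)^2 + L^2 * (s - t)^2 * (norm w')^2"
    by (simp add: X_def Y_def power_mult_distrib)
  have "replace_coord (seg s) k (m s) - replace_coord (seg t) k (m t) =
      replace_coord ((s - t) *\<^sub>R w) k (m s - m t)"
    by (simp add: seg_def replace_coord_diff algebra_simps)
  then have "(dist (pushed_segment g k c u v s) (pushed_segment g k c u v t))^2 =
      (s - t)^2 * (norm w')^2 + (m s - m t)^2"
    using norm_sq_replace_coord[of "replace_coord ((s - t) *\<^sub>R w) k (m s - m t)" k]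
    by (simp add: q dist_norm w_def w'_def replace_coord_scaleR[where r = 0, simplified]
        power_mult_distrib)
  also have "\<dots> \<le> (1 + L^2) * (s - t)^2 * ((norm w')^2 + (w$k)^2)"
  proof -
    have nonneg: "0 \<le> L^2 * ((w$k)^2 * (s - t)^2)"
      by simp
    show ?thesis
      using m_diff by (simp add: algebra_simps) (use nonneg in linarith)
  qed
  also have "\<dots> = (sqrt (1 + L^2) * dist u v * dist s t)^2"
    using norm_sq_replace_coord[of w k]
    by (simp add: \<open>dist u v = norm w\<close> w_def w'_def power_mult_distrib dist_real_def)
  finally show "dist (pushed_segment g k c u v s) (pushed_segment g k c u v t) \<le>
      sqrt (1 + L^2) * dist u v * dist s t"
    by (rule power2_le_imp_le) simp
qed (simp add: g_lip)

lemma norm_pushed_segment_less: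
  assumes g_lip: "lipschitz_on L UNIV g"
    and "u$k < g u" "norm u < r" "norm v < r" "c \<le> r" "t \<in> {0..1}"
  shows "norm (pushed_segment g k c u v t) < (4 + 2*L) * r"
proof -
  define s where "s = u + t *\<^sub>R (v - u)"
  define m where "m = min (s$k) (g s - c)"
  have "0 \<le> L"
    using g_lip by (rule lipschitz_on_nonneg)
  have "0 < r"
    using \<open>norm u < r\<close> norm_ge_zero order.strict_trans1 by blast
  have "s = (1 - t) *\<^sub>R u + t *\<^sub>R v"
    by (simp add: s_def algebra_simps)
  then have "s \<in> ball 0 r"
    using convexD_alt[OF convex_ball[of 0 r], of u v t] assms(3-6) by simp
  then have s_norm: "norm s < r"
    by simp
  then have s_k: "\<bar>s$k\<bar> < r"
    using component_le_norm_cart order.strict_trans1 by blast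
  have "norm (s - u) \<le> norm (v - u)"
    using \<open>t \<in> {0..1}\<close> by (simp add: s_def mult_left_le_one_le)
  also have "\<dots> \<le> 2 * r"
    using assms(3,4) norm_triangle_ineq4[of v u] by simp
  finally have "L * norm (u - s) \<le> L * (2 * r)"
    using \<open>0 \<le> L\<close> by (simp add: norm_minus_commute mult_left_mono)
  then have "g u - 2 * L * r \<le> g s"
    using lipschitz_on_normD[OF g_lip, of u s] by simp
  moreover have "- r < u$k"
    using assms(3) component_le_norm_cart[of u k] by linarith
  ultimately have "- (2 + 2*L) * r < m"
    using assms(2) s_k \<open>c \<le> r\<close> mult_nonneg_nonneg[OF \<open>0 \<le> L\<close> less_imp_le[OF \<open>0 < r\<close>]]
    unfolding m_def by (simp add: algebra_simps; linarith)
  moreover have "m \<le> s$k"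
    by (simp add: m_def)
  ultimately have "\<bar>m - s$k\<bar> < (3 + 2*L) * r"
    using s_k by (simp add: algebra_simps)
  then have "norm (pushed_segment g k c u v t - s) < (3 + 2*L) * r"
    by (simp add: pushed_segment_def Let_def s_def[symmetric] m_def[symmetric] norm_replace_coord_sub)
  then show ?thesis
    using s_norm norm_triangle_ineq2[of "pushed_segment g k c u v t" s] by (simp add: algebra_simps)
qed

lemma path_below_lipschitz_graph:
  fixes u v :: "real^'n" and g :: "real^'n \<Rightarrow> real"
  assumes g_indep: "\<forall>u v. (\<forall>i. i \<noteq> k \<longrightarrow> u$i = v$i) \<longrightarrow> g u = g v"
    and g_lip: "lipschitz_on L UNIV g"
    and "u$k < g u" "v$k < g v" "norm u < r" "norm v < r"
  obtains q :: "real \<Rightarrow> real^'n" where "q 0 = u" "q 1 = v"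
    "\<And>t. t \<in> {0..1} \<Longrightarrow> norm (q t) < (4 + 2*L) * r \<and> (q t)$k < g (q t)"
    "lipschitz_on (sqrt (1 + L^2) * dist u v) {0..1} q"
proof
  define c where "c = min r (min (g u - u$k) (g v - v$k))"
  have "0 < r"
    using \<open>norm u < r\<close> norm_ge_zero order.strict_trans1 by blast
  then have "0 < c" "c \<le> r"
    using assms(3,4) by (simp_all add: c_def)
  show "pushed_segment g k c u v 0 = u" "pushed_segment g k c u v 1 = v"
    by (simp_all add: pushed_segment_def c_def vec_eq_iff)
  show "lipschitz_on (sqrt (1 + L^2) * dist u v) {0..1} (pushed_segment g k c u v)"
    using g_indep g_lip by (rule lipschitz_on_pushed_segment)
  show "norm (pushed_segment g k c u v t) < (4 + 2*L) * r \<and>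
      (pushed_segment g k c u v t)$k < g (pushed_segment g k c u v t)" if "t \<in> {0..1}" for t
    using norm_pushed_segment_less[OF g_lip assms(3,5,6) \<open>c \<le> r\<close> that]
      pushed_segment_below[OF g_indep \<open>0 < c\<close>] by blast
qed

lemma orthogonal_transformation_dist:
  assumes "orthogonal_transformation f"
  shows "dist (f x) (f y) = dist x y"
  using assms by (simp add: dist_norm orthogonal_transformation_norm orthogonal_transformation_linear
      linear_diff[symmetric])

lemma path_in_graph_chart:
  fixes \<Omega> :: "(real^'n) set" and Q :: "real^'n \<Rightarrow> real^'n" and g :: "real^'n \<Rightarrow> real"
  assumes Q: "orthogonal_transformation Q"
    and box: "ball x0 R \<subseteq> {x. Q (x - x0) \<in> box a b}"
    and g_indep: "\<forall>u v. (\<forall>i. i \<noteq> k \<longrightarrow> u$i = v$i) \<longrightarrow> g u = g v"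
    and g_lip: "lipschitz_on L UNIV g"
    and chart: "\<Omega> \<inter> {x. Q (x - x0) \<in> box a b} =
      {x. Q (x - x0) \<in> box a b \<and> (Q (x - x0))$k < g (Q (x - x0))}"
    and x1: "x1 \<in> \<Omega> \<inter> ball x0 r" and x2: "x2 \<in> \<Omega> \<inter> ball x0 r" and "(4 + 2*L) * r \<le> R"
  obtains p :: "real \<Rightarrow> real^'n" where "p 0 = x1" "p 1 = x2"
    "p ` {0..1} \<subseteq> \<Omega> \<inter> ball x0 ((4 + 2*L) * r)"
    "lipschitz_on (sqrt (1 + L^2) * dist x1 x2) {0..1} p"
proof -
  have "0 \<le> L"
    using g_lip by (rule lipschitz_on_nonneg)
  moreover have "0 < r"
    using x1 by (metis IntD2 mem_ball zero_le_dist order.strict_trans1)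
  ultimately have Lr: "0 \<le> L * (r * 2)"
    by simp
  have "r \<le> R"
    using \<open>(4 + 2*L) * r \<le> R\<close> \<open>0 < r\<close> by (simp add: algebra_simps) (use Lr in linarith)
  have Q_inv: "Q (inv Q z) = z" "inv Q (Q z) = z" for z
    using orthogonal_transformation_surj[OF Q] orthogonal_transformation_inj[OF Q]
    by (simp_all add: surj_f_inv_f inv_f_f)
  have Q_norm: "norm (Q z) = norm z" "norm (inv Q z) = norm z" for z
    using Q orthogonal_transformation_inv[OF Q] by (simp_all add: orthogonal_transformation_norm)
  have in_Omega_iff: "x \<in> \<Omega> \<longleftrightarrow> (Q (x - x0))$k < g (Q (x - x0))" if "dist x0 x < R" for x
  proof -
    have "Q (x - x0) \<in> box a b"
      using box that by auto
    then show ?thesis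
      using arg_cong[OF chart, of "\<lambda>S. x \<in> S"] by simp
  qed
  have below: "(Q (x - x0))$k < g (Q (x - x0))" "norm (Q (x - x0)) < r" if "x \<in> \<Omega> \<inter> ball x0 r" for x
    using that in_Omega_iff[of x] \<open>r \<le> R\<close> by (auto simp: Q_norm dist_norm norm_minus_commute)
  txt \<open>Straighten the boundary by the chart, push the segment below the graph there, and map back.\<close>
  obtain q :: "real \<Rightarrow> real^'n" where q: "q 0 = Q (x1 - x0)" "q 1 = Q (x2 - x0)"
    "\<And>t. t \<in> {0..1} \<Longrightarrow> norm (q t) < (4 + 2*L) * r \<and> (q t)$k < g (q t)"
    "lipschitz_on (sqrt (1 + L^2) * dist (Q (x1 - x0)) (Q (x2 - x0))) {0..1} q"
    using path_below_lipschitz_graph[OF g_indep g_lip below(1)[OF x1] below(1)[OF x2]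
        below(2)[OF x1] below(2)[OF x2]] by blast
  define p where "p t = x0 + inv Q (q t)" for t
  have "p 0 = x1" "p 1 = x2"
    by (simp_all add: p_def q Q_inv)
  moreover have "p t \<in> \<Omega> \<inter> ball x0 ((4 + 2*L) * r)" if "t \<in> {0..1}" for t
  proof -
    have "dist x0 (p t) < (4 + 2*L) * r"
      using q(3)[OF that] by (simp add: p_def dist_norm Q_norm)
    then show ?thesis
      using in_Omega_iff[of "p t"] q(3)[OF that] \<open>(4 + 2*L) * r \<le> R\<close>
      by (simp add: p_def Q_inv)
  qed
  moreover have "lipschitz_on (sqrt (1 + L^2) * dist x1 x2) {0..1} p"
  proof -
    have "dist (p s) (p t) = dist (q s) (q t)" for s t
      using orthogonal_transformation_dist[OF orthogonal_transformation_inv[OF Q]]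
      by (simp add: p_def)
    moreover have "dist (Q (x1 - x0)) (Q (x2 - x0)) = dist x1 x2"
      using orthogonal_transformation_dist[OF Q, of "x1 - x0" "x2 - x0"] by (simp add: dist_norm)
    ultimately show ?thesis
      using q(4) by (simp add: lipschitz_on_def)
  qed
  ultimately show ?thesis
    using that by blast
qed

lemma lipschitz_on_linepath: "lipschitz_on (dist a b) S (linepath a b)"
proof (rule lipschitz_onI)
  fix s t
  have "linepath a b s - linepath a b t = (s - t) *\<^sub>R (b - a)"
    by (simp add: linepath_def algebra_simps)
  then show "dist (linepath a b s) (linepath a b t) \<le> dist a b * dist s t"
    by (simp add: dist_norm dist_real_def norm_minus_commute mult.commute)
qed simp

lemma joined_by_short_paths_ball:
  fixes \<Omega> :: "(real^'n) set"
  assumes "ball xb \<rho> \<subseteq> \<Omega>" "2 * \<rho> \<le> r" "1 \<le> \<Lambda>"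
  shows "joined_by_short_paths \<Omega> \<Lambda> r (ball xb \<rho>)"
  unfolding joined_by_short_paths_def
proof (intro ballI exI[of _ "linepath x1 x2" for x1 x2] conjI)
  fix x1 x2 assume x12: "x1 \<in> ball xb \<rho>" "x2 \<in> ball xb \<rho>"
  show "linepath x1 x2 0 = x1" "linepath x1 x2 1 = x2"
    by (simp_all add: linepath_0' linepath_1')
  have "ball xb \<rho> \<subseteq> ball x1 r"
    using x12(1) \<open>2 * \<rho> \<le> r\<close> by (auto intro!: dist_triangle_lt[where z = xb] simp: dist_commute)
  moreover have "closed_segment x1 x2 \<subseteq> ball xb \<rho>"
    using closed_segment_subset[OF x12 convex_ball] .
  ultimately show "linepath x1 x2 ` {0..1} \<subseteq> \<Omega> \<inter> ball x1 r"
    using assms(1) by (auto simp: linepath_image_01)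
  show "lipschitz_on (\<Lambda> * dist x1 x2) {0..1} (linepath x1 x2)"
    using mult_right_mono[OF \<open>1 \<le> \<Lambda>\<close> zero_le_dist[of x1 x2]]
    by (intro lipschitz_on_mono[OF lipschitz_on_linepath]) auto
qed

lemma joined_by_short_paths_near_chart:
  fixes \<Omega> :: "(real^'n) set" and Q :: "real^'n \<Rightarrow> real^'n" and g :: "real^'n \<Rightarrow> real"
  assumes Q: "orthogonal_transformation Q"
    and box: "ball x0 R \<subseteq> {x. Q (x - x0) \<in> box a b}"
    and g_indep: "\<forall>u v. (\<forall>i. i \<noteq> k \<longrightarrow> u$i = v$i) \<longrightarrow> g u = g v"
    and g_lip: "lipschitz_on L UNIV g"
    and chart: "\<Omega> \<inter> {x. Q (x - x0) \<in> box a b} =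
      {x. Q (x - x0) \<in> box a b \<and> (Q (x - x0))$k < g (Q (x - x0))}"
    and "x0 \<in> ball xb \<rho>" "(10 + 4*L) * \<rho> \<le> R"
  shows "joined_by_short_paths \<Omega> (sqrt (1 + L^2)) ((10 + 4*L) * \<rho>) (ball xb \<rho> \<inter> \<Omega>)"
  unfolding joined_by_short_paths_def
proof (intro ballI)
  fix x1 x2 assume "x1 \<in> ball xb \<rho> \<inter> \<Omega>" "x2 \<in> ball xb \<rho> \<inter> \<Omega>"
  then have x12: "x1 \<in> \<Omega> \<inter> ball x0 (2 * \<rho>)" "x2 \<in> \<Omega> \<inter> ball x0 (2 * \<rho>)"
    using \<open>x0 \<in> ball xb \<rho>\<close> by (auto intro!: dist_triangle_lt[where z = xb] simp: dist_commute)
  have "0 < \<rho>"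
    using \<open>x0 \<in> ball xb \<rho>\<close> by (metis mem_ball zero_le_dist le_less_trans)
  then have "(4 + 2*L) * (2 * \<rho>) \<le> R"
    using lipschitz_on_nonneg[OF g_lip] \<open>(10 + 4*L) * \<rho> \<le> R\<close> by (simp add: algebra_simps)
  then obtain p :: "real \<Rightarrow> real^'n" where "p 0 = x1" "p 1 = x2"
    "p ` {0..1} \<subseteq> \<Omega> \<inter> ball x0 ((4 + 2*L) * (2 * \<rho>))"
    "lipschitz_on (sqrt (1 + L^2) * dist x1 x2) {0..1} p"
    using path_in_graph_chart[OF Q box g_indep g_lip chart x12] by blast
  moreover have "ball x0 ((4 + 2*L) * (2 * \<rho>)) \<subseteq> ball x1 ((10 + 4*L) * \<rho>)"
    using x12(1) by (auto intro!: dist_triangle_lt[where z = x0] simp: dist_commute algebra_simps)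
  ultimately show "\<exists>p :: real \<Rightarrow> real^'n. p 0 = x1 \<and> p 1 = x2 \<and>
      p ` {0..1} \<subseteq> \<Omega> \<inter> ball x1 ((10 + 4*L) * \<rho>) \<and>
      lipschitz_on (sqrt (1 + L^2) * dist x1 x2) {0..1} p"
    by blast
qed

lemma lipschitz_domain_bound_paths:
  fixes \<Omega> :: "(real^'n) set"
  assumes "lipschitz_domain_bound \<Omega> L" "0 \<le> L"
  obtains R where "0 < R" "\<And>xb \<rho>. (10 + 4*L) * \<rho> \<le> R \<Longrightarrow>
    joined_by_short_paths \<Omega> (sqrt (1 + L^2)) ((10 + 4*L) * \<rho>) (ball xb \<rho> \<inter> \<Omega>)"
proof -
  obtain R where "0 < R" and charts: "\<forall>x0\<in>frontier \<Omega>.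
        \<exists>(Q :: real^'n \<Rightarrow> real^'n) (k :: 'n) (a :: real^'n) (b :: real^'n) (g :: real^'n \<Rightarrow> real).
          orthogonal_transformation Q \<and>
          ball x0 R \<subseteq> {x. Q (x - x0) \<in> box a b} \<and>
          (\<forall>u v. (\<forall>i. i \<noteq> k \<longrightarrow> u$i = v$i) \<longrightarrow> g u = g v) \<and>
          lipschitz_on L UNIV g \<and>
          \<Omega> \<inter> {x. Q (x - x0) \<in> box a b} =
            {x. Q (x - x0) \<in> box a b \<and> (Q (x - x0))$k < g (Q (x - x0))}"
    using assms(1) unfolding lipschitz_domain_bound_def by blast
  have "joined_by_short_paths \<Omega> (sqrt (1 + L^2)) ((10 + 4*L) * \<rho>) (ball xb \<rho> \<inter> \<Omega>)"
    if "(10 + 4*L) * \<rho> \<le> R" for xb \<rho>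
  proof (cases "ball xb \<rho> \<inter> frontier \<Omega> = {}")
    case True
    show ?thesis
    proof (cases "ball xb \<rho> \<inter> \<Omega> = {}")
      case False
      with True have "ball xb \<rho> \<subseteq> \<Omega>"
        using connected_Int_frontier[OF connected_ball, of xb \<rho> \<Omega>] by blast
      moreover obtain x where "x \<in> ball xb \<rho>"
        using False by blast
      then have "0 < \<rho>"
        by (metis mem_ball zero_le_dist le_less_trans)
      then have "2 * \<rho> \<le> (10 + 4*L) * \<rho>"
        using \<open>0 \<le> L\<close> by (simp add: algebra_simps)
      ultimately show ?thesis
        using joined_by_short_paths_ball[of xb \<rho> \<Omega> "(10 + 4*L) * \<rho>" "sqrt (1 + L^2)"]
        by (simp add: Int_absorb2)
    qed (simp add: joined_by_short_paths_def)
  next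
    case False
    then obtain x0 where "x0 \<in> ball xb \<rho>" "x0 \<in> frontier \<Omega>"
      by blast
    then show ?thesis
      using bspec[OF charts \<open>x0 \<in> frontier \<Omega>\<close>] joined_by_short_paths_near_chart that by blast
  qed
  with \<open>0 < R\<close> show ?thesis
    using that by blast
qed

lemma exists_radius_powr_le:
  fixes \<alpha> c R K :: real
  assumes "0 < \<alpha>" "0 < c" "0 < R" "0 < K"
  obtains \<rho> where "0 < \<rho>" "K * \<rho> \<le> R" "(K * \<rho>) powr \<alpha> \<le> c"
proof
  define r where "r = min R (c powr (1 / \<alpha>))"
  show "0 < r / K" "K * (r / K) \<le> R"
    using assms by (auto simp: r_def)
  have "r powr \<alpha> \<le> (c powr (1 / \<alpha>)) powr \<alpha>"
    using assms by (intro powr_mono2) (auto simp: r_def)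
  then show "(K * (r / K)) powr \<alpha> \<le> c"
    using assms by (simp add: powr_powr)
qed

lemma bi_lipschitz_C1_alpha_inverse:
  fixes y :: "real^'n \<Rightarrow> real^'n" and \<Omega> U :: "(real^'n) set"
  assumes "open \<Omega>" "open U" "U \<subseteq> \<Omega>"
    and der: "\<forall>x\<in>\<Omega>. (y has_derivative y' x) (at x)"
    and det: "\<forall>x\<in>\<Omega>. det (matrix (y' x)) \<ge> \<delta>" and bound: "\<forall>x\<in>\<Omega>. norm (matrix (y' x)) \<le> M1"
    and hoelder: "holder_norm_le \<Omega> (\<lambda>x. matrix (y' x)) \<alpha> M2"
    and "0 < \<delta>" "0 < M1" "0 < M2" "0 < \<alpha>"
    and small: "M2 * r powr \<alpha> * \<Lambda> \<le> \<delta> / M1 ^ (CARD('n) - 1) / 2"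
    and paths: "joined_by_short_paths \<Omega> \<Lambda> r U"
  shows "inj_on y U \<and>
    (\<forall>x1\<in>U. \<forall>x2\<in>U. (1/2) * (\<delta> / M1 ^ (CARD('n) - 1)) * norm (x1 - x2) \<le> norm (y x1 - y x2) \<and>
       norm (y x1 - y x2) \<le> M1 * \<Lambda> * norm (x1 - x2)) \<and>
    C1_alpha (y ` U) (the_inv_into U y) \<alpha>"
proof -
  define m where "m = \<delta> / M1 ^ (CARD('n) - 1)"
  have "0 < m"
    using \<open>0 < \<delta>\<close> \<open>0 < M1\<close> by (simp add: m_def)
  have der': "(y has_derivative y' x) (at x)" and bound': "norm (matrix (y' x)) \<le> M1"
    if "x \<in> \<Omega>" for x
    using der bound that by blast+
  have lower: "m * norm h \<le> norm (matrix (y' x) *v h)" if "x \<in> \<Omega>" for x h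
    unfolding m_def using bound det that \<open>0 < M1\<close> by (intro norm_matrix_vector_mult_ge_det) auto
  have holder: "norm (matrix (y' x) - matrix (y' z)) \<le> M2 * dist x z powr \<alpha>"
    if "x \<in> \<Omega>" "z \<in> \<Omega>" for x z
    using holder_norm_leD[OF hoelder that] .
  have estimates: "(1/2) * m * norm (x1 - x2) \<le> norm (y x1 - y x2)"
    "norm (y x1 - y x2) \<le> M1 * \<Lambda> * norm (x1 - x2)" if x12: "x1 \<in> U" "x2 \<in> U" for x1 x2
  proof -
    obtain p :: "real \<Rightarrow> real^'n" where p: "p 0 = x1" "p 1 = x2" "p ` {0..1} \<subseteq> \<Omega> \<inter> ball x1 r"
      "lipschitz_on (\<Lambda> * dist x1 x2) {0..1} p"
      using paths x12 unfolding joined_by_short_paths_def by blast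
    have "M2 * r powr \<alpha> * \<Lambda> \<le> m / 2"
      using small by (simp add: m_def)
    note bi_lipschitz_along_path[OF \<open>open \<Omega>\<close> der' bound' lower holder _ _ this p]
    then have "m / 2 * dist x1 x2 \<le> dist (y x1) (y x2)" "dist (y x1) (y x2) \<le> M1 * \<Lambda> * dist x1 x2"
      using \<open>0 < M2\<close> \<open>0 < \<alpha>\<close> by simp_all
    then show "(1/2) * m * norm (x1 - x2) \<le> norm (y x1 - y x2)"
      "norm (y x1 - y x2) \<le> M1 * \<Lambda> * norm (x1 - x2)"
      by (simp_all add: dist_norm)
  qed
  have "inj_on y U"
  proof (rule inj_onI)
    fix x1 x2 assume "x1 \<in> U" "x2 \<in> U" "y x1 = y x2"
    then show "x1 = x2"
      using estimates(1)[of x1 x2] \<open>0 < m\<close> by (simp add: mult_le_0_iff)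
  qed
  moreover have "C1_alpha (y ` U) (the_inv_into U y) \<alpha>"
  proof (rule C1_alpha_the_inv_into[where M = M2 and c = "m / 2", OF \<open>open U\<close> \<open>inj_on y U\<close> _ _ \<open>0 < m\<close>])
    have U_\<Omega>: "x \<in> \<Omega>" if "x \<in> U" for x
      using that \<open>U \<subseteq> \<Omega>\<close> by blast
    show "(y has_derivative y' x) (at x)" if "x \<in> U" for x
      using der U_\<Omega>[OF that] by blast
    show "invertible (matrix (y' x))" if "x \<in> U" for x
      using det U_\<Omega>[OF that] \<open>0 < \<delta>\<close> by (force simp: invertible_det_nz)
    show "m * norm h \<le> norm (matrix (y' x) *v h)" if "x \<in> U" for x h
      using lower U_\<Omega>[OF that] by blast
    show "norm (matrix (y' x) - matrix (y' z)) \<le> M2 * dist x z powr \<alpha>" if "x \<in> U" "z \<in> U" for x z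
      using holder U_\<Omega> that by blast
    show "m / 2 * dist x z \<le> dist (y x) (y z)" if "x \<in> U" "z \<in> U" for x z
      using estimates(1) that by (simp add: dist_norm)
  qed (use \<open>0 < m\<close> \<open>0 < M2\<close> \<open>0 < \<alpha>\<close> in auto)
  ultimately show ?thesis
    using estimates unfolding m_def by blast
qed

theorem lemma3p6:
  fixes \<Omega> :: "(real^'n) set" and L \<alpha> \<delta> M1 M2 :: real
  assumes "lipschitz_domain_bound \<Omega> L" and "L > 0"
    and "0 < \<alpha>" and "\<alpha> \<le> 1" and "\<delta> > 0" and "M1 > 0" and "M2 > 0"
  shows "\<exists>\<rho>>0. \<forall>(y :: real^'n \<Rightarrow> real^'n) y'.
     ((\<forall>x\<in>\<Omega>. (y has_derivative y' x) (at x)) \<and>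
      (\<forall>x\<in>\<Omega>. det (matrix (y' x)) \<ge> \<delta>) \<and>
      (\<forall>x\<in>\<Omega>. norm (matrix (y' x)) \<le> M1) \<and>
      holder_norm_le \<Omega> (\<lambda>x. matrix (y' x)) \<alpha> M2)
     \<longrightarrow> (\<forall>xb\<in>closure \<Omega>.
            inj_on y (ball xb \<rho> \<inter> \<Omega>) \<and>
            (\<forall>x1\<in>ball xb \<rho> \<inter> \<Omega>. \<forall>x2\<in>ball xb \<rho> \<inter> \<Omega>.
               (1/2) * (\<delta> / M1 ^ (CARD('n) - 1)) * norm (x1 - x2) \<le> norm (y x1 - y x2) \<and>
               norm (y x1 - y x2) \<le> M1 * sqrt (1 + L^2) * norm (x1 - x2)) \<and>
            C1_alpha (y ` (ball xb \<rho> \<inter> \<Omega>)) (the_inv_into (ball xb \<rho> \<inter> \<Omega>) y) \<alpha>)"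
proof -
  have "open \<Omega>"
    using assms(1) by (simp add: lipschitz_domain_bound_def)
  obtain R where "0 < R" and paths: "\<And>xb \<rho>. (10 + 4*L) * \<rho> \<le> R \<Longrightarrow>
      joined_by_short_paths \<Omega> (sqrt (1 + L^2)) ((10 + 4*L) * \<rho>) (ball xb \<rho> \<inter> \<Omega>)"
    using lipschitz_domain_bound_paths[OF assms(1) less_imp_le[OF \<open>L > 0\<close>]] by blast
  define c where "c = \<delta> / M1 ^ (CARD('n) - 1) / 2 / (M2 * sqrt (1 + L^2))"
  have "0 < c"
    using assms(5-7) by (simp add: c_def add_pos_nonneg)
  then obtain \<rho> where "0 < \<rho>" "(10 + 4*L) * \<rho> \<le> R" "((10 + 4*L) * \<rho>) powr \<alpha> \<le> c"
    using exists_radius_powr_le[of \<alpha> c R "10 + 4*L"] \<open>0 < \<alpha>\<close> \<open>0 < R\<close> \<open>L > 0\<close> by auto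
  then have "M2 * ((10 + 4*L) * \<rho>) powr \<alpha> * sqrt (1 + L^2) \<le> M2 * c * sqrt (1 + L^2)"
    using \<open>0 < M2\<close> by (intro mult_right_mono mult_left_mono) auto
  also have "\<dots> = \<delta> / M1 ^ (CARD('n) - 1) / 2"
    using \<open>0 < M2\<close> add_pos_nonneg[OF zero_less_one zero_le_power2[of L]] by (simp add: c_def)
  finally have small: "M2 * ((10 + 4*L) * \<rho>) powr \<alpha> * sqrt (1 + L^2) \<le> \<delta> / M1 ^ (CARD('n) - 1) / 2" .
  show ?thesis
    using bi_lipschitz_C1_alpha_inverse[OF \<open>open \<Omega>\<close> open_Int[OF open_ball \<open>open \<Omega>\<close>] Int_lower2
        _ _ _ _ assms(5-7,3) small paths[OF \<open>(10 + 4*L) * \<rho> \<le> R\<close>]] \<open>0 < \<rho>\<close>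
    by blast
qed

end
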